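(* For any two probability distributions $\pi_V,\pi'_V$ on $\mathbb V$ and any $1\le q\le\mathsf n$, \[\big|\log\mathbb P_{\pi_V}(X_q\mid X_{q+1:\mathsf n})-\log\mathbb P_{\pi'_V}(X_q\mid X_{q+1:\mathsf n})\big|\le2\sum_{\ell=0}^{\mathsf n+1-q}(\nu_q\nu_{q+\ell-1}\nu_{q+\ell})^{-1}\Big(\prod_{k=q+1}^{q+\ell-1}(1-\nu_k)\Big)\|\pi_V-\pi'_V\|_{\mathsf{tv}},\] for every realization of the observations (empty products equal $1$).
   Context: Let $\mathsf n\ge1$, $\mathbb V$ a measurable space, $\mathbb X$ a discrete set, and $K_i:\mathbb X\times\mathbb V^2\to[0,\infty)$ for $i\in\mathbb Z$, each $K_i(\cdot,v,w)$ a probability on $\mathbb X$. For a probability $\pi_V$ on $\mathbb V$, $\mathbb P_{\pi_V}$ is the law of $(V_{1:\mathsf n+1},X_{1:\mathsf n})$ with $V_i$ i.i.d. $\pi_V$ and, given $V$, $X_i$ independent with $\mathbb P(X_i=x\mid V)=K_i(x,V_i,V_{i+1})$; $\mathbb P_{\pi_V}(X_q\mid X_{q+1:\mathsf n})$ is the conditional probability of the observed value of $X_q$ given the observed $X_{q+1:\mathsf n}$. Assumption H2: there exist $\nu_i>0$ ($i\in\mathbb Z$) with $\nu_i\le K_i(x,v,w)\le1$ for all $x,i,v,w$. $\|\xi\|_{\mathsf{tv}}=\sup\{\int f\,d\xi:\|f\|_\infty=1\}$. *)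

theory Defs
  imports "HOL-Probability.Probability"
begin

text \<open>The hidden variables V_1, ..., V_{n+1} are i.i.d. with law
  \<pi>, and given V the X_i are independent with P(X_i = y | V) = K i y V_i V_{i+1}; the
  probability of the observed values x_{a:n} is therefore the expectation of the product
  of the corresponding kernel values (an empty product being 1).\<close>
definition obs_prob ::
  "'v measure \<Rightarrow> (int \<Rightarrow> 'x \<Rightarrow> 'v \<Rightarrow> 'v \<Rightarrow> real) \<Rightarrow> int \<Rightarrow> int \<Rightarrow> (int \<Rightarrow> 'x) \<Rightarrow> real"
where
  "obs_prob \<pi> K n a x =
     (\<integral> v. (\<Prod>i\<in>{a..n}. K i (x i) (v i) (v (i + 1))) \<partial>(PiM {1..n+1} (\<lambda>_. \<pi>)))"

definition cond_prob ::
  "'v measure \<Rightarrow> (int \<Rightarrow> 'x \<Rightarrow> 'v \<Rightarrow> 'v \<Rightarrow> real) \<Rightarrow> int \<Rightarrow> int \<Rightarrow> (int \<Rightarrow> 'x) \<Rightarrow> real"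
where
  "cond_prob \<pi> K n q x = obs_prob \<pi> K n q x / obs_prob \<pi> K n (q + 1) x"

definition tv_norm :: "'v measure \<Rightarrow> 'v measure \<Rightarrow> 'v measure \<Rightarrow> real" where
  "tv_norm M \<pi> \<pi>' =
     Sup {(\<integral> v. f v \<partial>\<pi>) - (\<integral> v. f v \<partial>\<pi>') | f.
            f \<in> borel_measurable M \<and> bounded (f ` space M) \<and>
            (SUP v\<in>space M. \<bar>f v\<bar>) = 1}"

end

theory Submission
  imports Defs
begin

text \<open>Interpolate between the two laws by hybrids in which V_i has law \<pi>' for i < j and \<pi>
  for i \<ge> j, so that the difference of logarithms telescopes into single swaps of the law of one
  hidden state V_j, j = q, ..., n + 1.  Swapping V_q only changes the integral of the backward
  message at V_q, at cost \<parallel>\<pi> - \<pi>'\<parallel> / \<nu>_q.  For j > q both the numerator and the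
  denominator are integrals over V_j of forward messages (started at q and at q + 1) against
  the same backward message; by Doeblin's contraction the ratio of the two forward messages stays
  in an interval of length \<Prod>_{q<k<j} (1 - \<nu>_k) above \<nu>_q, and a first order perturbation of the
  quotient then costs 2 \<Prod>_{q<k<j} (1 - \<nu>_k) \<parallel>\<pi> - \<pi>'\<parallel> / (\<nu>_q \<nu>_(j-1) \<nu>_j).\<close>

lemma prob_space_integrable_bounded:
  assumes "prob_space N" "sets N = sets M" "f \<in> borel_measurable M"
    and "\<And>v. v \<in> space M \<Longrightarrow> \<bar>f v\<bar> \<le> (B::real)"
  shows "integrable N f"
proof -
  interpret N: prob_space N by fact
  have "space N = space M" using assms(2) by (rule sets_eq_imp_space_eq)
  moreover have "f \<in> borel_measurable N" using assms(3) by (simp add: measurable_cong_sets[OF assms(2) refl])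
  ultimately show ?thesis using assms(4) by (intro N.integrable_const_bound[where B=B]) auto
qed

lemma prob_space_integral_bounds:
  assumes "prob_space N" "sets N = sets M" "f \<in> borel_measurable M"
    and bounds: "\<And>v. v \<in> space M \<Longrightarrow> c \<le> f v \<and> f v \<le> (d::real)"
  shows "c \<le> (\<integral>v. f v \<partial>N) \<and> (\<integral>v. f v \<partial>N) \<le> d"
proof -
  interpret N: prob_space N by fact
  have sp: "space N = space M" using assms(2) by (rule sets_eq_imp_space_eq)
  have int: "integrable N f"
    by (rule prob_space_integrable_bounded[OF assms(1-3), of "\<bar>c\<bar> + \<bar>d\<bar>"]) (use bounds in force)
  show ?thesis using N.integral_ge_const[OF int, of c] N.integral_le_const[OF int, of d] bounds sp by auto
qed

lemma integral_mult_kernel_bounds: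
  assumes N: "prob_space N" "sets N = sets M"
    and g: "g \<in> borel_measurable M" and k: "k \<in> borel_measurable M"
    and g_bounds: "\<And>u. u \<in> space M \<Longrightarrow> 0 \<le> g u \<and> g u \<le> (B::real)"
    and k_bounds: "\<And>u. u \<in> space M \<Longrightarrow> \<nu> \<le> k u \<and> k u \<le> 1" and "0 \<le> \<nu>"
  shows "\<nu> * (\<integral>u. g u \<partial>N) \<le> (\<integral>u. g u * k u \<partial>N) \<and> (\<integral>u. g u * k u \<partial>N) \<le> (\<integral>u. g u \<partial>N)"
proof -
  have sp: "space N = space M" using N(2) sets_eq_imp_space_eq by blast
  have k_abs: "\<bar>k u\<bar> \<le> 1" if "u \<in> space M" for u using k_bounds[OF that] \<open>0 \<le> \<nu>\<close> by auto
  have ig: "integrable N g"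
    by (rule prob_space_integrable_bounded[OF N g, of B]) (use g_bounds in force)
  have igk: "integrable N (\<lambda>u. g u * k u)"
  proof (rule prob_space_integrable_bounded[OF N _, of _ B])
    show "(\<lambda>u. g u * k u) \<in> borel_measurable M" using g k by measurable
    fix u assume u: "u \<in> space M"
    have "\<bar>g u * k u\<bar> \<le> B * 1"
      unfolding abs_mult using g_bounds[OF u] k_abs[OF u] by (intro mult_mono) auto
    then show "\<bar>g u * k u\<bar> \<le> B" by simp
  qed
  have "\<nu> * g u \<le> g u * k u" if "u \<in> space M" for u
    using mult_left_mono[of \<nu> "k u" "g u"] g_bounds[OF that] k_bounds[OF that] by (simp add: mult.commute)
  then have "(\<integral>u. \<nu> * g u \<partial>N) \<le> (\<integral>u. g u * k u \<partial>N)"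
    using sp by (intro integral_mono igk) (auto simp: ig)
  moreover have "(\<integral>u. g u * k u \<partial>N) \<le> (\<integral>u. g u \<partial>N)"
    using g_bounds k_bounds sp by (intro integral_mono igk ig) (auto intro: mult_left_le)
  ultimately show ?thesis by simp
qed

lemma borel_measurable_integral_prob_space:
  assumes N: "prob_space N" "sets N = sets M"
    and F: "(\<lambda>(v, w). F v w :: real) \<in> borel_measurable (M \<Otimes>\<^sub>M M)"
  shows "(\<lambda>v. \<integral>w. F v w \<partial>N) \<in> borel_measurable M"
proof -
  interpret N: prob_space N by fact
  have "sets (M \<Otimes>\<^sub>M N) = sets (M \<Otimes>\<^sub>M M)" by (rule sets_pair_measure_cong) (auto simp: N)
  then have "(\<lambda>(v, w). F v w) \<in> borel_measurable (M \<Otimes>\<^sub>M N)" using F measurable_cong_sets by blast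
  then show ?thesis by (rule N.borel_measurable_lebesgue_integral[of "\<lambda>v w. F v w", simplified])
qed

lemma prob_space_Fubini_bounded:
  assumes N1: "prob_space N1" "sets N1 = sets M" and N2: "prob_space N2" "sets N2 = sets M"
    and F: "(\<lambda>(u, v). F u v :: real) \<in> borel_measurable (M \<Otimes>\<^sub>M M)"
    and bound: "\<And>u v. u \<in> space M \<Longrightarrow> v \<in> space M \<Longrightarrow> \<bar>F u v\<bar> \<le> B"
  shows "(\<integral>v. (\<integral>u. F u v \<partial>N1) \<partial>N2) = (\<integral>u. (\<integral>v. F u v \<partial>N2) \<partial>N1)"
proof -
  interpret N1: prob_space N1 by fact
  interpret N2: prob_space N2 by fact
  interpret P: pair_prob_space N1 N2 ..
  have sets: "sets (N1 \<Otimes>\<^sub>M N2) = sets (M \<Otimes>\<^sub>M M)" by (rule sets_pair_measure_cong) (auto simp: N1 N2)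
  then have "space (N1 \<Otimes>\<^sub>M N2) = space (M \<Otimes>\<^sub>M M)" by (rule sets_eq_imp_space_eq)
  moreover have "(\<lambda>(u, v). F u v) \<in> borel_measurable (N1 \<Otimes>\<^sub>M N2)"
    using F sets measurable_cong_sets by blast
  ultimately have "integrable (N1 \<Otimes>\<^sub>M N2) (\<lambda>(u, v). F u v)"
    using bound by (intro P.integrable_const_bound[where B=B]) (auto simp: space_pair_measure)
  then show ?thesis by (rule P.Fubini_integral)
qed

lemma SUP_divide_pos:
  fixes g :: "'a \<Rightarrow> real"
  assumes "A \<noteq> {}" "bdd_above (g ` A)" "0 < s"
  shows "(SUP v\<in>A. g v / s) = (SUP v\<in>A. g v) / s"
proof -
  have "(\<lambda>y. y / s) (Sup (g ` A)) = Sup ((\<lambda>y. y / s) ` g ` A)"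
    using assms by (intro continuous_at_Sup_mono) (auto intro!: monoI divide_right_mono continuous_intros)
  then show ?thesis by (simp add: image_image)
qed

lemma abs_le_SUP_abs:
  fixes f :: "'a \<Rightarrow> real"
  assumes "bounded (f ` A)" "v \<in> A"
  shows "\<bar>f v\<bar> \<le> (SUP w\<in>A. \<bar>f w\<bar>)"
  using assms by (intro cSUP_upper) (auto simp: bounded_iff bdd_above_def)

lemma abs_ln_diff_le:
  fixes x y L :: real
  assumes "0 < L" "L \<le> x" "L \<le> y"
  shows "\<bar>ln x - ln y\<bar> \<le> \<bar>x - y\<bar> / L"
proof -
  have ln_diff: "ln a - ln b \<le> (a - b) / L" if "L \<le> b" "b \<le> a" for a b
  proof -
    have "0 < b" "0 < a" using that assms by linarith+
    then have "ln a - ln b = ln (a / b)" by (simp add: ln_div)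
    also have "\<dots> \<le> a / b - 1" using \<open>0 < b\<close> \<open>0 < a\<close> by (intro ln_le_minus_one) simp
    also have "\<dots> = (a - b) / b" using \<open>0 < b\<close> by (simp add: field_simps)
    also have "\<dots> \<le> (a - b) / L" using that assms by (intro divide_left_mono) auto
    finally show ?thesis .
  qed
  show ?thesis
  proof (cases "y \<le> x")
    case True
    then have "0 \<le> ln x - ln y" using assms by simp
    then show ?thesis using ln_diff[of y x] True assms by simp
  next
    case False
    then have "0 \<le> ln y - ln x" using assms by simp
    then show ?thesis using ln_diff[of x y] False assms by simp
  qed
qed

lemma abs_quotient_diff_le:
  fixes C C' E E' P \<rho> D t :: real
  assumes pos: "0 < P" "0 < \<rho>" "0 \<le> D" "0 \<le> t"
    and C: "\<rho> * P \<le> C" "\<rho> * P \<le> C'" and E': "0 \<le> E'" "E' \<le> D * C'"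
    and diff: "\<bar>C - C'\<bar> \<le> P * t" "\<bar>E - E'\<bar> \<le> D * P * t"
  shows "\<bar>E / C - E' / C'\<bar> \<le> 2 * D * t / \<rho>"
proof -
  have "0 < C" "0 < C'" using C pos by (smt (verit) mult_pos_pos)+
  have "E / C - E' / C' = (E - E') / C + E' * (C' - C) / (C * C')"
    using \<open>0 < C\<close> \<open>0 < C'\<close> by (simp add: field_simps)
  then have "\<bar>E / C - E' / C'\<bar> \<le> \<bar>E - E'\<bar> / C + E' * \<bar>C' - C\<bar> / (C * C')"
    using \<open>0 < C\<close> \<open>0 < C'\<close> E' by (simp add: abs_mult abs_div order_trans[OF abs_triangle_ineq])
  also have "\<bar>E - E'\<bar> / C \<le> D * t / \<rho>"
  proof -
    have "\<bar>E - E'\<bar> / C \<le> (D * P * t) / (\<rho> * P)"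
      by (rule frac_le) (use diff C pos in auto)
    then show ?thesis using pos by simp
  qed
  also have "E' * \<bar>C' - C\<bar> / (C * C') \<le> D * t / \<rho>"
  proof -
    have "E' * \<bar>C' - C\<bar> / (C * C') \<le> (D * C') * (P * t) / (C * C')"
      using E' diff \<open>0 < C\<close> \<open>0 < C'\<close> by (intro divide_right_mono mult_mono) (auto simp: abs_minus_commute)
    also have "\<dots> = D * P * t / C" using \<open>0 < C'\<close> by simp
    also have "\<dots> \<le> D * P * t / (\<rho> * P)" using C pos \<open>0 < C\<close> by (intro divide_left_mono) (auto intro!: mult_pos_pos)
    finally show ?thesis using pos by simp
  qed
  finally show ?thesis by simp
qed

lemma shifted_product_bounds:
  fixes a b t m Mx B T \<rho>\<^sub>b \<rho>\<^sub>t D :: real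
  assumes "m * b \<le> a" "a \<le> Mx * b" "\<rho>\<^sub>b * B \<le> b" "b \<le> B" "\<rho>\<^sub>t * T \<le> t" "t \<le> T"
    and "0 < B" "0 < T" "0 < \<rho>\<^sub>b" "0 < \<rho>\<^sub>t" "Mx - m \<le> D"
  shows "(\<rho>\<^sub>b * \<rho>\<^sub>t) * (B * T) \<le> b * t \<and> b * t \<le> B * T \<and> 0 \<le> (a - m * b) * t \<and>
    (a - m * b) * t \<le> D * (b * t)"
proof -
  have "0 \<le> \<rho>\<^sub>b * B" "0 \<le> \<rho>\<^sub>t * T" using assms by simp_all
  then have "0 \<le> b" "0 \<le> t" using assms by linarith+
  have bt: "(\<rho>\<^sub>b * B) * (\<rho>\<^sub>t * T) \<le> b * t" "b * t \<le> B * T"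
    using mult_mono[of "\<rho>\<^sub>b * B" b "\<rho>\<^sub>t * T" t] mult_mono[of b B t T] assms
      \<open>0 \<le> b\<close> \<open>0 \<le> t\<close> \<open>0 \<le> \<rho>\<^sub>t * T\<close> by simp_all
  have "0 \<le> a - m * b" "a - m * b \<le> D * b"
    using assms mult_right_mono[of "Mx - m" D b] \<open>0 \<le> b\<close> by (auto simp: algebra_simps)
  then have "0 \<le> (a - m * b) * t" "(a - m * b) * t \<le> D * (b * t)"
    using mult_right_mono[of "a - m * b" "D * b" t] \<open>0 \<le> t\<close> by (simp_all add: mult.assoc)
  with bt show ?thesis by (simp add: mult_ac)
qed

lemma sum_int_telescope:
  fixes f :: "int \<Rightarrow> real"
  assumes "0 \<le> N"
  shows "(\<Sum>l\<in>{0..N}. f l - f (l + 1)) = f 0 - f (N + 1)"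
  using assms
proof (induction N rule: int_ge_induct)
  case (step N)
  have "{0..N + 1} = insert (N + 1) {0..N}" using step(1) by auto
  then show ?case using step by simp
qed simp

section \<open>Doeblin's contraction\<close>

lemma ratio_bounds_imp_unit_interval:
  fixes a b m Mx :: real
  assumes "0 \<le> b" "b \<le> 1" "m * b \<le> a" "a \<le> Mx * b" "0 \<le> m" "Mx \<le> 1"
  shows "0 \<le> a \<and> a \<le> 1"
  using assms mult_right_mono[of Mx 1 b] by (smt (verit) mult_nonneg_nonneg)

lemma integral_quotient_bounds:
  fixes a b :: "'v \<Rightarrow> real"
  assumes N: "prob_space N" "sets N = sets M" and meas: "a \<in> borel_measurable M" "b \<in> borel_measurable M"
    and bounds: "\<And>u. u \<in> space M \<Longrightarrow> 0 \<le> b u \<and> b u \<le> 1 \<and> m * b u \<le> a u \<and> a u \<le> Mx * b u"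
    and "0 \<le> m" "Mx \<le> 1" and pos: "0 < (\<integral>u. b u \<partial>N)"
  shows "m \<le> (\<integral>u. a u \<partial>N) / (\<integral>u. b u \<partial>N) \<and> (\<integral>u. a u \<partial>N) / (\<integral>u. b u \<partial>N) \<le> Mx"
proof -
  have a_bounds: "0 \<le> a u \<and> a u \<le> 1" if "u \<in> space M" for u
    using ratio_bounds_imp_unit_interval bounds[OF that] \<open>0 \<le> m\<close> \<open>Mx \<le> 1\<close> by blast
  have int: "integrable N a" "integrable N b"
    using prob_space_integrable_bounded[OF N meas(1), of 1] prob_space_integrable_bounded[OF N meas(2), of 1]
      a_bounds bounds by force+
  have sp: "space N = space M" using N(2) by (rule sets_eq_imp_space_eq)
  have "(\<integral>u. m * b u \<partial>N) \<le> (\<integral>u. a u \<partial>N)" by (rule integral_mono) (use bounds sp int in auto)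
  moreover have "(\<integral>u. a u \<partial>N) \<le> (\<integral>u. Mx * b u \<partial>N)" by (rule integral_mono) (use bounds sp int in auto)
  ultimately show ?thesis using pos by (simp add: field_simps)
qed

lemma integral_kernel_gap:
  fixes g b k :: "'v \<Rightarrow> real"
  assumes N: "prob_space N" "sets N = sets M"
    and meas: "g \<in> borel_measurable M" "b \<in> borel_measurable M" "k \<in> borel_measurable M"
    and g_bounds: "\<And>u. u \<in> space M \<Longrightarrow> 0 \<le> g u \<and> g u \<le> 1"
    and b_bounds: "\<And>u. u \<in> space M \<Longrightarrow> 0 \<le> b u \<and> b u \<le> 1"
    and k_bounds: "\<And>u. u \<in> space M \<Longrightarrow> \<nu> \<le> k u \<and> k u \<le> 1"
    and "0 \<le> \<nu>" "0 \<le> \<delta>" and gap: "(\<integral>u. g u \<partial>N) = \<delta> * (\<integral>u. b u \<partial>N)"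
  shows "\<nu> * \<delta> * (\<integral>u. b u * k u \<partial>N) \<le> (\<integral>u. g u * k u \<partial>N)"
proof -
  have "\<nu> * \<delta> * (\<integral>u. b u * k u \<partial>N) \<le> \<nu> * \<delta> * (\<integral>u. b u \<partial>N)"
    using integral_mult_kernel_bounds[OF N meas(2,3) b_bounds k_bounds \<open>0 \<le> \<nu>\<close>] \<open>0 \<le> \<nu>\<close> \<open>0 \<le> \<delta>\<close>
    by (intro mult_left_mono) auto
  also have "\<dots> = \<nu> * (\<integral>u. g u \<partial>N)" using gap by simp
  also have "\<dots> \<le> (\<integral>u. g u * k u \<partial>N)"
    using integral_mult_kernel_bounds[OF N meas(1,3) g_bounds k_bounds \<open>0 \<le> \<nu>\<close>] by blast
  finally show ?thesis .
qed

text \<open>Doeblin's contraction: a kernel bounded below by \<nu> pulls both ends of the range [m, Mx]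
  of the ratio a / b towards its mean c, shrinking the range by the factor 1 - \<nu>.\<close>
lemma doeblin_step:
  fixes a b k :: "'v \<Rightarrow> real"
  assumes N: "prob_space N" "sets N = sets M"
    and meas: "a \<in> borel_measurable M" "b \<in> borel_measurable M" "k \<in> borel_measurable M"
    and bounds: "\<And>u. u \<in> space M \<Longrightarrow> 0 \<le> b u \<and> b u \<le> 1 \<and> m * b u \<le> a u \<and> a u \<le> Mx * b u"
    and k_bounds: "\<And>u. u \<in> space M \<Longrightarrow> \<nu> \<le> k u \<and> k u \<le> 1"
    and "0 \<le> \<nu>" "0 \<le> m" "Mx \<le> 1"
    and c: "m \<le> c" "c \<le> Mx" "(\<integral>u. a u \<partial>N) = c * (\<integral>u. b u \<partial>N)"
  shows "(m + \<nu> * (c - m)) * (\<integral>u. b u * k u \<partial>N) \<le> (\<integral>u. a u * k u \<partial>N)"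
    and "(\<integral>u. a u * k u \<partial>N) \<le> (Mx - \<nu> * (Mx - c)) * (\<integral>u. b u * k u \<partial>N)"
proof -
  have a_bounds: "0 \<le> a u \<and> a u \<le> 1" if "u \<in> space M" for u
    using ratio_bounds_imp_unit_interval bounds[OF that] \<open>0 \<le> m\<close> \<open>Mx \<le> 1\<close> by blast
  have b_bounds: "0 \<le> b u \<and> b u \<le> 1" if "u \<in> space M" for u using bounds[OF that] by blast
  have "\<bar>a u * k u\<bar> \<le> 1" "\<bar>b u * k u\<bar> \<le> 1" if "u \<in> space M" for u
    using a_bounds[OF that] b_bounds[OF that] k_bounds[OF that] \<open>0 \<le> \<nu>\<close>
    by (auto simp: abs_mult intro!: mult_le_one)
  moreover have "(\<lambda>u. a u * k u) \<in> borel_measurable M" "(\<lambda>u. b u * k u) \<in> borel_measurable M"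
    using meas by measurable
  ultimately have int: "integrable N a" "integrable N b" "integrable N (\<lambda>u. a u * k u)" "integrable N (\<lambda>u. b u * k u)"
    using a_bounds b_bounds meas by (auto intro!: prob_space_integrable_bounded[OF N, of _ 1])
  note gap = integral_kernel_gap[OF N _ meas(2,3) _ b_bounds k_bounds \<open>0 \<le> \<nu>\<close>]
  have "\<nu> * (c - m) * (\<integral>u. b u * k u \<partial>N) \<le> (\<integral>u. (a u - m * b u) * k u \<partial>N)"
  proof (rule gap)
    show "0 \<le> a u - m * b u \<and> a u - m * b u \<le> 1" if "u \<in> space M" for u
      using bounds[OF that] a_bounds[OF that] mult_nonneg_nonneg[OF \<open>0 \<le> m\<close>, of "b u"] by linarith
  qed (use meas c int in \<open>auto simp: algebra_simps\<close>)
  then show "(m + \<nu> * (c - m)) * (\<integral>u. b u * k u \<partial>N) \<le> (\<integral>u. a u * k u \<partial>N)"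
    using int by (simp add: left_diff_distrib mult.assoc algebra_simps)
  have "\<nu> * (Mx - c) * (\<integral>u. b u * k u \<partial>N) \<le> (\<integral>u. (Mx * b u - a u) * k u \<partial>N)"
  proof (rule gap)
    show "0 \<le> Mx * b u - a u \<and> Mx * b u - a u \<le> 1" if "u \<in> space M" for u
      using bounds[OF that] a_bounds[OF that] mult_right_mono[OF \<open>Mx \<le> 1\<close>, of "b u"] by simp
  qed (use meas c int in \<open>auto simp: algebra_simps\<close>)
  then show "(\<integral>u. a u * k u \<partial>N) \<le> (Mx - \<nu> * (Mx - c)) * (\<integral>u. b u * k u \<partial>N)"
    using int by (simp add: left_diff_distrib mult.assoc algebra_simps)
qed

section \<open>Total variation\<close>

context
  fixes M \<pi> \<pi>' :: "'v measure"
  assumes \<pi>: "prob_space \<pi>" "sets \<pi> = sets M" and \<pi>': "prob_space \<pi>'" "sets \<pi>' = sets M"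
begin

lemma integral_diff_le_tv_norm:
  assumes "f \<in> borel_measurable M" "bounded (f ` space M)" "(SUP v\<in>space M. \<bar>f v\<bar>) = 1"
  shows "(\<integral>v. f v \<partial>\<pi>) - (\<integral>v. f v \<partial>\<pi>') \<le> tv_norm M \<pi> \<pi>'"
proof -
  have "bdd_above {(\<integral>v. g v \<partial>\<pi>) - (\<integral>v. g v \<partial>\<pi>') | g. (g :: 'v \<Rightarrow> real) \<in> borel_measurable M \<and>
          bounded (g ` space M) \<and> (SUP v\<in>space M. \<bar>g v\<bar>) = 1}"
  proof (rule bdd_aboveI)
    fix y assume "y \<in> {(\<integral>v. g v \<partial>\<pi>) - (\<integral>v. g v \<partial>\<pi>') | g. (g :: 'v \<Rightarrow> real) \<in> borel_measurable M \<and>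
          bounded (g ` space M) \<and> (SUP v\<in>space M. \<bar>g v\<bar>) = 1}"
    then obtain g where y: "y = (\<integral>v. g v \<partial>\<pi>) - (\<integral>v. g v \<partial>\<pi>')"
      and g: "g \<in> borel_measurable M" "bounded (g ` space M)" "(SUP v\<in>space M. \<bar>g v\<bar>) = 1"
      by blast
    have "-1 \<le> g v \<and> g v \<le> 1" if "v \<in> space M" for v
      using abs_le_SUP_abs[OF g(2) that] g(3) by auto
    then have "(\<integral>v. g v \<partial>\<pi>) \<le> 1" "-1 \<le> (\<integral>v. g v \<partial>\<pi>')"
      using prob_space_integral_bounds[OF \<pi> g(1)] prob_space_integral_bounds[OF \<pi>' g(1)] by blast+
    then show "y \<le> 2" unfolding y by linarith
  qed
  then show ?thesis unfolding tv_norm_def using assms by (intro cSup_upper) blast+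
qed

lemma tv_norm_nonneg: "0 \<le> tv_norm M \<pi> \<pi>'"
proof -
  have "space M \<noteq> {}"
    using prob_space.not_empty[OF \<pi>(1)] sets_eq_imp_space_eq[OF \<pi>(2)] by simp
  then have "(\<integral>v. 1 \<partial>\<pi>) - (\<integral>v. 1 \<partial>\<pi>') \<le> tv_norm M \<pi> \<pi>'"
    by (intro integral_diff_le_tv_norm) (auto simp: bounded_iff)
  then show ?thesis by (simp add: prob_space.prob_space[OF \<pi>(1)] prob_space.prob_space[OF \<pi>'(1)])
qed

lemma abs_integral_diff_le_tv_norm:
  assumes f: "f \<in> borel_measurable M" and bound: "\<And>v. v \<in> space M \<Longrightarrow> \<bar>f v\<bar> \<le> S"
  shows "\<bar>(\<integral>v. f v \<partial>\<pi>) - (\<integral>v. f v \<partial>\<pi>')\<bar> \<le> S * tv_norm M \<pi> \<pi>'"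
proof -
  have ne: "space M \<noteq> {}"
    using prob_space.not_empty[OF \<pi>(1)] sets_eq_imp_space_eq[OF \<pi>(2)] by simp
  have bdd: "bounded (f ` space M)" using bound by (auto simp: bounded_iff)
  define s where "s = (SUP v\<in>space M. \<bar>f v\<bar>)"
  have f_le_s: "\<bar>f v\<bar> \<le> s" if "v \<in> space M" for v unfolding s_def by (rule abs_le_SUP_abs[OF bdd that])
  have "s \<le> S" unfolding s_def using ne bound by (intro cSUP_least) auto
  moreover have "0 \<le> s" using f_le_s ne by force
  moreover have "\<bar>(\<integral>v. f v \<partial>\<pi>) - (\<integral>v. f v \<partial>\<pi>')\<bar> \<le> s * tv_norm M \<pi> \<pi>'"
  proof (cases "s = 0")
    case True
    then have "0 \<le> f v \<and> f v \<le> 0" if "v \<in> space M" for v using f_le_s[OF that] by auto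
    then have "(\<integral>v. f v \<partial>\<pi>) = 0" "(\<integral>v. f v \<partial>\<pi>') = 0"
      using prob_space_integral_bounds[OF \<pi> f] prob_space_integral_bounds[OF \<pi>' f] by (meson antisym)+
    then show ?thesis using True by simp
  next
    case False
    with \<open>0 \<le> s\<close> have "0 < s" by simp
    define g where "g v = f v / s" for v
    have g: "g \<in> borel_measurable M" "(\<lambda>v. - g v) \<in> borel_measurable M" unfolding g_def using f by measurable
    have "bounded (g ` space M)" "bounded ((\<lambda>v. - g v) ` space M)"
      using f_le_s \<open>0 < s\<close> unfolding bounded_iff g_def by (auto simp: abs_div intro!: exI[of _ 1])
    moreover have "(SUP v\<in>space M. \<bar>g v\<bar>) = 1" "(SUP v\<in>space M. \<bar>- g v\<bar>) = 1"
      using SUP_divide_pos[OF ne _ \<open>0 < s\<close>, of "\<lambda>v. \<bar>f v\<bar>"] bdd \<open>0 < s\<close>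
      by (auto simp: g_def abs_div s_def bounded_iff bdd_above_def)
    ultimately have "(\<integral>v. g v \<partial>\<pi>) - (\<integral>v. g v \<partial>\<pi>') \<le> tv_norm M \<pi> \<pi>'"
      "(\<integral>v. - g v \<partial>\<pi>) - (\<integral>v. - g v \<partial>\<pi>') \<le> tv_norm M \<pi> \<pi>'"
      using integral_diff_le_tv_norm g by blast+
    then have "s * \<bar>(\<integral>v. g v \<partial>\<pi>) - (\<integral>v. g v \<partial>\<pi>')\<bar> \<le> s * tv_norm M \<pi> \<pi>'"
      using \<open>0 < s\<close> by (intro mult_left_mono) auto
    moreover have "s * \<bar>(\<integral>v. g v \<partial>\<pi>) - (\<integral>v. g v \<partial>\<pi>')\<bar> = \<bar>(\<integral>v. f v \<partial>\<pi>) - (\<integral>v. f v \<partial>\<pi>')\<bar>"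
      using \<open>0 < s\<close> by (simp add: g_def diff_divide_distrib[symmetric] abs_div)
    ultimately show ?thesis by simp
  qed
  ultimately show ?thesis using mult_right_mono[OF _ tv_norm_nonneg, of s S] by linarith
qed

lemma abs_ln_shifted_quotient_diff_le:
  assumes c: "c \<in> borel_measurable M" and e: "e \<in> borel_measurable M"
    and pos: "0 < P" "0 < \<rho>" "0 \<le> D" "0 < L" "L \<le> m"
    and bounds: "\<And>v. v \<in> space M \<Longrightarrow> \<rho> * P \<le> c v \<and> c v \<le> P \<and> 0 \<le> e v \<and> e v \<le> D * c v"
  shows "\<bar>ln (m + (\<integral>v. e v \<partial>\<pi>) / (\<integral>v. c v \<partial>\<pi>)) - ln (m + (\<integral>v. e v \<partial>\<pi>') / (\<integral>v. c v \<partial>\<pi>'))\<bar>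
    \<le> 2 * D * tv_norm M \<pi> \<pi>' / (L * \<rho>)"
proof -
  define tv where "tv = tv_norm M \<pi> \<pi>'"
  have integrals: "\<rho> * P \<le> (\<integral>v. c v \<partial>N) \<and> 0 \<le> (\<integral>v. e v \<partial>N) \<and> (\<integral>v. e v \<partial>N) \<le> D * (\<integral>v. c v \<partial>N)"
    if N: "prob_space N" "sets N = sets M" for N
  proof -
    have sp: "space N = space M" using N(2) by (rule sets_eq_imp_space_eq)
    have c0: "0 \<le> c v" if "v \<in> space M" for v using bounds[OF that] pos by (smt (verit) mult_pos_pos)
    have ic: "integrable N c"
      by (rule prob_space_integrable_bounded[OF N c, of P]) (use bounds c0 in force)
    have ie: "integrable N e"
    proof (rule prob_space_integrable_bounded[OF N e, of "D * P"])
      fix v assume v: "v \<in> space M"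
      have "D * c v \<le> D * P" using bounds[OF v] pos by (intro mult_left_mono) auto
      then show "\<bar>e v\<bar> \<le> D * P" using bounds[OF v] by simp
    qed
    have "(\<integral>v. e v \<partial>N) \<le> (\<integral>v. D * c v \<partial>N)"
      using bounds sp by (intro integral_mono ie) (auto simp: ic)
    moreover have "0 \<le> (\<integral>v. e v \<partial>N)" using bounds sp by (intro integral_nonneg_AE) auto
    ultimately show ?thesis
      using prob_space_integral_bounds[OF N c, of "\<rho> * P" P] bounds by simp
  qed
  define C C' E E' where "C = (\<integral>v. c v \<partial>\<pi>)" and "C' = (\<integral>v. c v \<partial>\<pi>')"
    and "E = (\<integral>v. e v \<partial>\<pi>)" and "E' = (\<integral>v. e v \<partial>\<pi>')"
  have "\<bar>C - C'\<bar> \<le> P * tv" unfolding C_def C'_def tv_def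
    using bounds pos by (intro abs_integral_diff_le_tv_norm[OF c]) (smt (verit) mult_pos_pos)
  moreover have "\<bar>E - E'\<bar> \<le> D * P * tv" unfolding E_def E'_def tv_def
  proof (rule abs_integral_diff_le_tv_norm[OF e])
    fix v assume v: "v \<in> space M"
    have "D * c v \<le> D * P" using bounds[OF v] pos by (intro mult_left_mono) auto
    then show "\<bar>e v\<bar> \<le> D * P" using bounds[OF v] by simp
  qed
  ultimately have quotient: "\<bar>E / C - E' / C'\<bar> \<le> 2 * D * tv / \<rho>"
    using integrals[OF \<pi>] integrals[OF \<pi>'] pos tv_norm_nonneg
    unfolding C_def C'_def E_def E'_def tv_def by (intro abs_quotient_diff_le) auto
  have "0 \<le> E / C" "0 \<le> E' / C'"
    using integrals[OF \<pi>] integrals[OF \<pi>'] pos unfolding C_def C'_def E_def E'_def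
    by (auto intro!: divide_nonneg_pos) (smt (verit) mult_pos_pos)+
  then have "\<bar>ln (m + E / C) - ln (m + E' / C')\<bar> \<le> \<bar>E / C - E' / C'\<bar> / L"
    using abs_ln_diff_le[of L "m + E / C" "m + E' / C'"] pos by simp
  also have "\<dots> \<le> (2 * D * tv / \<rho>) / L" using quotient pos by (intro divide_right_mono) auto
  finally show ?thesis unfolding C_def C'_def E_def E'_def tv_def by (simp add: mult.commute)
qed

lemma abs_ln_integral_diff_le:
  assumes f: "f \<in> borel_measurable M" and "0 < \<rho>" "0 < S"
    and bounds: "\<And>v. v \<in> space M \<Longrightarrow> \<rho> * S \<le> f v \<and> f v \<le> S"
  shows "\<bar>ln (\<integral>v. f v \<partial>\<pi>) - ln (\<integral>v. f v \<partial>\<pi>')\<bar> \<le> tv_norm M \<pi> \<pi>' / \<rho>"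
proof -
  have pos: "0 < \<rho> * S" using \<open>0 < \<rho>\<close> \<open>0 < S\<close> by simp
  have "\<bar>ln (\<integral>v. f v \<partial>\<pi>) - ln (\<integral>v. f v \<partial>\<pi>')\<bar> \<le> \<bar>(\<integral>v. f v \<partial>\<pi>) - (\<integral>v. f v \<partial>\<pi>')\<bar> / (\<rho> * S)"
    using prob_space_integral_bounds[OF \<pi> f bounds] prob_space_integral_bounds[OF \<pi>' f bounds]
    by (intro abs_ln_diff_le pos) auto
  also have "\<dots> \<le> S * tv_norm M \<pi> \<pi>' / (\<rho> * S)"
  proof (intro divide_right_mono abs_integral_diff_le_tv_norm[OF f])
    show "\<bar>f v\<bar> \<le> S" if "v \<in> space M" for v using bounds[OF that] pos by linarith
  qed (use pos in simp)
  also have "\<dots> = tv_norm M \<pi> \<pi>' / \<rho>" using \<open>0 < S\<close> by simp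
  finally show ?thesis .
qed

lemma abs_ln_quotient_diff_le:
  assumes meas: "a \<in> borel_measurable M" "b \<in> borel_measurable M" "t \<in> borel_measurable M"
    and ratio: "\<And>v. v \<in> space M \<Longrightarrow> m * b v \<le> a v \<and> a v \<le> Mx * b v"
    and b_bounds: "\<And>v. v \<in> space M \<Longrightarrow> \<rho>\<^sub>b * B \<le> b v \<and> b v \<le> B"
    and t_bounds: "\<And>v. v \<in> space M \<Longrightarrow> \<rho>\<^sub>t * T \<le> t v \<and> t v \<le> T"
    and pos: "0 < B" "0 < T" "0 < \<rho>\<^sub>b" "0 < \<rho>\<^sub>t" "0 < L" "L \<le> m" "0 \<le> D" "Mx - m \<le> D"
  shows "\<bar>ln ((\<integral>v. a v * t v \<partial>\<pi>) / (\<integral>v. b v * t v \<partial>\<pi>)) - ln ((\<integral>v. a v * t v \<partial>\<pi>') / (\<integral>v. b v * t v \<partial>\<pi>'))\<bar>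
    \<le> 2 * D * tv_norm M \<pi> \<pi>' / (L * (\<rho>\<^sub>b * \<rho>\<^sub>t))"
proof -
  define c e where "c v = b v * t v" and "e v = (a v - m * b v) * t v" for v
  have ce: "c \<in> borel_measurable M" "e \<in> borel_measurable M" unfolding c_def e_def using meas by measurable
  have bounds: "(\<rho>\<^sub>b * \<rho>\<^sub>t) * (B * T) \<le> c v \<and> c v \<le> B * T \<and> 0 \<le> e v \<and> e v \<le> D * c v"
    if "v \<in> space M" for v
    unfolding c_def e_def
    by (rule shifted_product_bounds) (use ratio[OF that] b_bounds[OF that] t_bounds[OF that] pos in auto)
  have quotient: "(\<integral>v. a v * t v \<partial>N) / (\<integral>v. b v * t v \<partial>N) = m + (\<integral>v. e v \<partial>N) / (\<integral>v. c v \<partial>N)"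
    if N: "prob_space N" "sets N = sets M" for N
  proof -
    have "0 \<le> (\<rho>\<^sub>b * \<rho>\<^sub>t) * (B * T)" using pos by simp
    then have "\<bar>c v\<bar> \<le> B * T" "\<bar>e v\<bar> \<le> D * (B * T)" if "v \<in> space M" for v
      using bounds[OF that] mult_left_mono[of "c v" "B * T" D] pos by (smt (verit))+
    then have int: "integrable N c" "integrable N e"
      by (auto intro!: prob_space_integrable_bounded[OF N ce(1)] prob_space_integrable_bounded[OF N ce(2)])
    have "(\<rho>\<^sub>b * \<rho>\<^sub>t) * (B * T) \<le> (\<integral>v. c v \<partial>N)"
      using prob_space_integral_bounds[OF N ce(1), of "(\<rho>\<^sub>b * \<rho>\<^sub>t) * (B * T)" "B * T"] bounds by blast
    then have "0 < (\<integral>v. c v \<partial>N)" using pos by (smt (verit) mult_pos_pos)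
    moreover have "(\<integral>v. a v * t v \<partial>N) = (\<integral>v. e v + m * c v \<partial>N)"
      unfolding c_def e_def by (simp add: algebra_simps)
    moreover have "(\<integral>v. e v + m * c v \<partial>N) = (\<integral>v. e v \<partial>N) + m * (\<integral>v. c v \<partial>N)"
      using int by simp
    moreover have "(\<integral>v. b v * t v \<partial>N) = (\<integral>v. c v \<partial>N)" unfolding c_def ..
    ultimately show ?thesis by (simp add: field_simps)
  qed
  show ?thesis
    unfolding quotient[OF \<pi>] quotient[OF \<pi>']
    by (rule abs_ln_shifted_quotient_diff_le[OF ce, where P="B * T" and \<rho>="\<rho>\<^sub>b * \<rho>\<^sub>t"]) (use pos bounds in auto)
qed

end

section \<open>Forward and backward messages\<close>

locale hmm =
  fixes M :: "'v measure" and K :: "int \<Rightarrow> 'x \<Rightarrow> 'v \<Rightarrow> 'v \<Rightarrow> real"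
    and \<nu> :: "int \<Rightarrow> real" and n :: int and x :: "int \<Rightarrow> 'x"
  assumes K_measurable: "\<And>i y. (\<lambda>(v, w). K i y v w) \<in> borel_measurable (M \<Otimes>\<^sub>M M)"
    and space_nonempty: "space M \<noteq> {}"
    and \<nu>_pos: "\<And>i. 0 < \<nu> i"
    and K_bounds: "\<And>i y v w. v \<in> space M \<Longrightarrow> w \<in> space M \<Longrightarrow> \<nu> i \<le> K i y v w \<and> K i y v w \<le> 1"
begin

lemma \<nu>_le_one: "\<nu> i \<le> 1"
proof -
  obtain v where "v \<in> space M" using space_nonempty by blast
  then show ?thesis using K_bounds[of v v i] by fastforce
qed

lemma prod_\<nu>_pos: "0 < (\<Prod>k\<in>I. \<nu> k)"
  using \<nu>_pos by (simp add: prod_pos)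

lemma K_measurable_snd: "v \<in> space M \<Longrightarrow> (\<lambda>w. K i y v w) \<in> borel_measurable M"
  using measurable_comp[OF measurable_Pair1' K_measurable[of i y]] by (simp add: comp_def)

lemma K_measurable_fst: "w \<in> space M \<Longrightarrow> (\<lambda>v. K i y v w) \<in> borel_measurable M"
  using measurable_comp[OF measurable_Pair2' K_measurable[of i y]] by (simp add: comp_def)

lemma K_measurable_swap: "(\<lambda>(v, u). K i y u v) \<in> borel_measurable (M \<Otimes>\<^sub>M M)"
  using measurable_comp[OF measurable_pair_swap' K_measurable[of i y]] by (simp add: comp_def case_prod_beta)

definition admissible :: "(int \<Rightarrow> 'v measure) \<Rightarrow> bool" where
  "admissible \<mu> \<longleftrightarrow> (\<forall>i. prob_space (\<mu> i) \<and> sets (\<mu> i) = sets M)"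

lemma admissibleD:
  assumes "admissible \<mu>"
  shows "prob_space (\<mu> i)" "sets (\<mu> i) = sets M"
  using assms unfolding admissible_def by auto

text \<open>The hidden states are drawn independently, V_i with law \<mu> i, so that one family
  covers both the model and the hybrids interpolating between two laws.  backward \<mu> i v is
  the probability of the observations x_i, ..., x_n given V_i = v, and forward s \<mu> i v is the
  density, with respect to \<mu> i, of V_i jointly with the observations x_s, ..., x_(i-1).\<close>

function backward :: "(int \<Rightarrow> 'v measure) \<Rightarrow> int \<Rightarrow> 'v \<Rightarrow> real" where
  "backward \<mu> i = (if n < i then (\<lambda>_. 1)
     else (\<lambda>v. \<integral>w. K i (x i) v w * backward \<mu> (i + 1) w \<partial>\<mu> (i + 1)))"
  by auto
termination by (relation "Wellfounded.measure (\<lambda>(\<mu>, i). nat (n + 1 - i))") auto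

function forward :: "int \<Rightarrow> (int \<Rightarrow> 'v measure) \<Rightarrow> int \<Rightarrow> 'v \<Rightarrow> real" where
  "forward s \<mu> i = (if i \<le> s then (\<lambda>_. 1)
     else (\<lambda>v. \<integral>u. forward s \<mu> (i - 1) u * K (i - 1) (x (i - 1)) u v \<partial>\<mu> (i - 1)))"
  by auto
termination by (relation "Wellfounded.measure (\<lambda>(s, \<mu>, i). nat (i - s))") auto

declare backward.simps[simp del] forward.simps[simp del]

lemma backward_measurable: "admissible \<mu> \<Longrightarrow> backward \<mu> i \<in> borel_measurable M"
proof (induction \<mu> i rule: backward.induct)
  case (1 \<mu> i)
  show ?case
  proof (cases "n < i")
    case False
    have "(\<lambda>(v, w). K i (x i) v w * backward \<mu> (i + 1) w) \<in> borel_measurable (M \<Otimes>\<^sub>M M)"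
      using K_measurable[of i "x i"] 1 False
      by (auto intro!: borel_measurable_times measurable_compose[OF measurable_snd] simp: case_prod_beta)
    then have "(\<lambda>v. \<integral>w. K i (x i) v w * backward \<mu> (i + 1) w \<partial>\<mu> (i + 1)) \<in> borel_measurable M"
      using admissibleD[OF 1(2)] by (intro borel_measurable_integral_prob_space) auto
    with False show ?thesis by (subst backward.simps) simp
  qed (subst backward.simps, simp)
qed

lemma forward_measurable: "admissible \<mu> \<Longrightarrow> forward s \<mu> i \<in> borel_measurable M"
proof (induction s \<mu> i rule: forward.induct)
  case (1 s \<mu> i)
  show ?case
  proof (cases "i \<le> s")
    case False
    have "(\<lambda>(v, u). forward s \<mu> (i - 1) u * K (i - 1) (x (i - 1)) u v) \<in> borel_measurable (M \<Otimes>\<^sub>M M)"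
      using K_measurable_swap[of "i - 1" "x (i - 1)"] 1 False
      by (auto intro!: borel_measurable_times measurable_compose[OF measurable_snd] simp: case_prod_beta)
    then have "(\<lambda>v. \<integral>u. forward s \<mu> (i - 1) u * K (i - 1) (x (i - 1)) u v \<partial>\<mu> (i - 1)) \<in> borel_measurable M"
      using admissibleD[OF 1(2)] by (intro borel_measurable_integral_prob_space) auto
    with False show ?thesis by (subst forward.simps) simp
  qed (subst forward.simps, simp)
qed

lemma backward_step:
  assumes \<mu>: "admissible \<mu>" and "i \<le> n" and v: "v \<in> space M"
    and next_bounds: "\<And>w. w \<in> space M \<Longrightarrow> 0 \<le> backward \<mu> (i + 1) w \<and> backward \<mu> (i + 1) w \<le> 1"
  shows "\<nu> i * (\<integral>w. backward \<mu> (i + 1) w \<partial>\<mu> (i + 1)) \<le> backward \<mu> i v \<and>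
         backward \<mu> i v \<le> (\<integral>w. backward \<mu> (i + 1) w \<partial>\<mu> (i + 1))"
proof -
  have "backward \<mu> i v = (\<integral>w. backward \<mu> (i + 1) w * K i (x i) v w \<partial>\<mu> (i + 1))"
    using \<open>i \<le> n\<close> by (subst backward.simps) (simp add: mult.commute)
  moreover have "\<nu> i * (\<integral>w. backward \<mu> (i + 1) w \<partial>\<mu> (i + 1))
      \<le> (\<integral>w. backward \<mu> (i + 1) w * K i (x i) v w \<partial>\<mu> (i + 1)) \<and>
    (\<integral>w. backward \<mu> (i + 1) w * K i (x i) v w \<partial>\<mu> (i + 1)) \<le> (\<integral>w. backward \<mu> (i + 1) w \<partial>\<mu> (i + 1))"
    by (rule integral_mult_kernel_bounds[OF admissibleD[OF \<mu>] backward_measurable[OF \<mu>]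
        K_measurable_snd[OF v] next_bounds]) (use K_bounds[OF v] \<nu>_pos[of i] in \<open>auto simp: less_imp_le\<close>)
  ultimately show ?thesis by simp
qed

lemma forward_step:
  assumes \<mu>: "admissible \<mu>" and "s < i" and v: "v \<in> space M"
    and prev_bounds: "\<And>u. u \<in> space M \<Longrightarrow> 0 \<le> forward s \<mu> (i - 1) u \<and> forward s \<mu> (i - 1) u \<le> 1"
  shows "\<nu> (i - 1) * (\<integral>u. forward s \<mu> (i - 1) u \<partial>\<mu> (i - 1)) \<le> forward s \<mu> i v \<and>
         forward s \<mu> i v \<le> (\<integral>u. forward s \<mu> (i - 1) u \<partial>\<mu> (i - 1))"
proof -
  have "forward s \<mu> i v = (\<integral>u. forward s \<mu> (i - 1) u * K (i - 1) (x (i - 1)) u v \<partial>\<mu> (i - 1))"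
    using \<open>s < i\<close> by (subst forward.simps) simp
  moreover have "\<nu> (i - 1) * (\<integral>u. forward s \<mu> (i - 1) u \<partial>\<mu> (i - 1))
      \<le> (\<integral>u. forward s \<mu> (i - 1) u * K (i - 1) (x (i - 1)) u v \<partial>\<mu> (i - 1)) \<and>
    (\<integral>u. forward s \<mu> (i - 1) u * K (i - 1) (x (i - 1)) u v \<partial>\<mu> (i - 1))
      \<le> (\<integral>u. forward s \<mu> (i - 1) u \<partial>\<mu> (i - 1))"
    by (rule integral_mult_kernel_bounds[OF admissibleD[OF \<mu>] forward_measurable[OF \<mu>]
        K_measurable_fst[OF v] prev_bounds]) (use K_bounds[OF _ v] \<nu>_pos[of "i - 1"] in \<open>auto simp: less_imp_le\<close>)
  ultimately show ?thesis by simp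
qed

lemma backward_bounds:
  "admissible \<mu> \<Longrightarrow> v \<in> space M \<Longrightarrow> (\<Prod>k\<in>{i..n}. \<nu> k) \<le> backward \<mu> i v \<and> backward \<mu> i v \<le> 1"
proof (induction \<mu> i arbitrary: v rule: backward.induct)
  case (1 \<mu> i)
  show ?case
  proof (cases "n < i")
    case True
    then show ?thesis by (simp add: backward.simps[of \<mu> i])
  next
    case False
    have next_bounds: "(\<Prod>k\<in>{i + 1..n}. \<nu> k) \<le> backward \<mu> (i + 1) w \<and> backward \<mu> (i + 1) w \<le> 1"
      if "w \<in> space M" for w
      using 1 False that by blast
    then have "(\<Prod>k\<in>{i + 1..n}. \<nu> k) \<le> (\<integral>w. backward \<mu> (i + 1) w \<partial>\<mu> (i + 1)) \<and>
        (\<integral>w. backward \<mu> (i + 1) w \<partial>\<mu> (i + 1)) \<le> 1"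
      by (intro prob_space_integral_bounds[OF admissibleD[OF 1(2)] backward_measurable[OF 1(2)]])
    moreover have "\<nu> i * (\<integral>w. backward \<mu> (i + 1) w \<partial>\<mu> (i + 1)) \<le> backward \<mu> i v \<and>
        backward \<mu> i v \<le> (\<integral>w. backward \<mu> (i + 1) w \<partial>\<mu> (i + 1))"
      using next_bounds prod_\<nu>_pos[of "{i + 1..n}"] False
      by (intro backward_step[OF 1(2) _ 1(3)]) force+
    moreover have "(\<Prod>k\<in>{i..n}. \<nu> k) = \<nu> i * (\<Prod>k\<in>{i + 1..n}. \<nu> k)"
    proof -
      have "{i..n} = insert i {i + 1..n}" using False by auto
      then show ?thesis by simp
    qed
    ultimately show ?thesis using \<nu>_pos[of i] mult_left_mono[of _ _ "\<nu> i"] by (smt (verit))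
  qed
qed

lemma forward_bounds:
  "admissible \<mu> \<Longrightarrow> v \<in> space M \<Longrightarrow> (\<Prod>k\<in>{s..i - 1}. \<nu> k) \<le> forward s \<mu> i v \<and> forward s \<mu> i v \<le> 1"
proof (induction s \<mu> i arbitrary: v rule: forward.induct)
  case (1 s \<mu> i)
  show ?case
  proof (cases "i \<le> s")
    case True
    then show ?thesis by (simp add: forward.simps[of s \<mu> i])
  next
    case False
    have prev_bounds: "(\<Prod>k\<in>{s..i - 1 - 1}. \<nu> k) \<le> forward s \<mu> (i - 1) u \<and> forward s \<mu> (i - 1) u \<le> 1"
      if "u \<in> space M" for u
      using 1 False that by blast
    then have "(\<Prod>k\<in>{s..i - 1 - 1}. \<nu> k) \<le> (\<integral>u. forward s \<mu> (i - 1) u \<partial>\<mu> (i - 1)) \<and>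
        (\<integral>u. forward s \<mu> (i - 1) u \<partial>\<mu> (i - 1)) \<le> 1"
      by (intro prob_space_integral_bounds[OF admissibleD[OF 1(2)] forward_measurable[OF 1(2)]])
    moreover have "\<nu> (i - 1) * (\<integral>u. forward s \<mu> (i - 1) u \<partial>\<mu> (i - 1)) \<le> forward s \<mu> i v \<and>
        forward s \<mu> i v \<le> (\<integral>u. forward s \<mu> (i - 1) u \<partial>\<mu> (i - 1))"
      using prev_bounds prod_\<nu>_pos[of "{s..i - 1 - 1}"] False
      by (intro forward_step[OF 1(2) _ 1(3)]) force+
    moreover have "(\<Prod>k\<in>{s..i - 1}. \<nu> k) = \<nu> (i - 1) * (\<Prod>k\<in>{s..i - 1 - 1}. \<nu> k)"
    proof -
      have "{s..i - 1} = insert (i - 1) {s..i - 1 - 1}" using False by auto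
      then show ?thesis by simp
    qed
    ultimately show ?thesis using \<nu>_pos[of "i - 1"] mult_left_mono[of _ _ "\<nu> (i - 1)"] by (smt (verit))
  qed
qed

lemma backward_oscillation:
  assumes \<mu>: "admissible \<mu>" and "i \<le> n + 1"
  obtains S where "0 < S" "\<And>v. v \<in> space M \<Longrightarrow> \<nu> i * S \<le> backward \<mu> i v \<and> backward \<mu> i v \<le> S"
proof (cases "i = n + 1")
  case True
  then show ?thesis using that[of 1] \<nu>_le_one by (simp add: backward.simps)
next
  case False
  let ?S = "\<integral>w. backward \<mu> (i + 1) w \<partial>\<mu> (i + 1)"
  have next_bounds: "(\<Prod>k\<in>{i + 1..n}. \<nu> k) \<le> backward \<mu> (i + 1) w \<and> backward \<mu> (i + 1) w \<le> 1"
    if "w \<in> space M" for w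
    using backward_bounds[OF \<mu> that] .
  have "(\<Prod>k\<in>{i + 1..n}. \<nu> k) \<le> ?S"
    using prob_space_integral_bounds[OF admissibleD[OF \<mu>] backward_measurable[OF \<mu>] next_bounds] by blast
  then have "0 < ?S" using prod_\<nu>_pos[of "{i + 1..n}"] by linarith
  moreover have "\<nu> i * ?S \<le> backward \<mu> i v \<and> backward \<mu> i v \<le> ?S" if "v \<in> space M" for v
    using next_bounds prod_\<nu>_pos[of "{i + 1..n}"] False \<open>i \<le> n + 1\<close>
    by (intro backward_step[OF \<mu> _ that]) force+
  ultimately show ?thesis using that by blast
qed

lemma forward_oscillation:
  assumes \<mu>: "admissible \<mu>"
  obtains S where "0 < S" "\<And>v. v \<in> space M \<Longrightarrow> \<nu> (i - 1) * S \<le> forward s \<mu> i v \<and> forward s \<mu> i v \<le> S"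
proof (cases "i \<le> s")
  case True
  then show ?thesis using that[of 1] \<nu>_le_one by (simp add: forward.simps)
next
  case False
  let ?S = "\<integral>u. forward s \<mu> (i - 1) u \<partial>\<mu> (i - 1)"
  have prev_bounds: "(\<Prod>k\<in>{s..i - 1 - 1}. \<nu> k) \<le> forward s \<mu> (i - 1) u \<and> forward s \<mu> (i - 1) u \<le> 1"
    if "u \<in> space M" for u
    using forward_bounds[OF \<mu> that] .
  have "(\<Prod>k\<in>{s..i - 1 - 1}. \<nu> k) \<le> ?S"
    using prob_space_integral_bounds[OF admissibleD[OF \<mu>] forward_measurable[OF \<mu>] prev_bounds] by blast
  then have "0 < ?S" using prod_\<nu>_pos[of "{s..i - 1 - 1}"] by linarith
  moreover have "\<nu> (i - 1) * ?S \<le> forward s \<mu> i v \<and> forward s \<mu> i v \<le> ?S" if "v \<in> space M" for v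
    using prev_bounds prod_\<nu>_pos[of "{s..i - 1 - 1}"] False
    by (intro forward_step[OF \<mu> _ that]) force+
  ultimately show ?thesis using that by blast
qed

lemma backward_unit_interval: "admissible \<mu> \<Longrightarrow> v \<in> space M \<Longrightarrow> 0 \<le> backward \<mu> i v \<and> backward \<mu> i v \<le> 1"
  using backward_bounds prod_\<nu>_pos by (smt (verit))

lemma forward_unit_interval: "admissible \<mu> \<Longrightarrow> v \<in> space M \<Longrightarrow> 0 \<le> forward s \<mu> i v \<and> forward s \<mu> i v \<le> 1"
  using forward_bounds prod_\<nu>_pos by (smt (verit))

text \<open>Both sides are the probability of the observations x_s, ..., x_n: the right side conditions
  on V_s, the left one on V_j.\<close>
lemma integral_forward_backward:
  assumes \<mu>: "admissible \<mu>" and "s \<le> j" "j \<le> n + 1"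
  shows "(\<integral>v. forward s \<mu> j v * backward \<mu> j v \<partial>\<mu> j) = (\<integral>v. backward \<mu> s v \<partial>\<mu> s)"
  using \<open>s \<le> j\<close> \<open>j \<le> n + 1\<close>
proof (induction j rule: int_ge_induct)
  case base
  then show ?case by (simp add: forward.simps)
next
  case (step j)
  have "(\<integral>v. forward s \<mu> (j + 1) v * backward \<mu> (j + 1) v \<partial>\<mu> (j + 1))
      = (\<integral>v. (\<integral>u. forward s \<mu> j u * K j (x j) u v * backward \<mu> (j + 1) v \<partial>\<mu> j) \<partial>\<mu> (j + 1))"
    using step(1) by (subst forward.simps) simp
  also have "\<dots> = (\<integral>u. (\<integral>v. forward s \<mu> j u * K j (x j) u v * backward \<mu> (j + 1) v \<partial>\<mu> (j + 1)) \<partial>\<mu> j)"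
  proof (rule prob_space_Fubini_bounded[OF admissibleD[OF \<mu>] admissibleD[OF \<mu>], where B=1])
    show "(\<lambda>(u, v). forward s \<mu> j u * K j (x j) u v * backward \<mu> (j + 1) v) \<in> borel_measurable (M \<Otimes>\<^sub>M M)"
      using K_measurable[of j "x j"] forward_measurable[OF \<mu>] backward_measurable[OF \<mu>]
      by (auto intro!: borel_measurable_times measurable_compose[OF measurable_fst]
            measurable_compose[OF measurable_snd] simp: case_prod_beta)
    fix u v assume "u \<in> space M" "v \<in> space M"
    then show "\<bar>forward s \<mu> j u * K j (x j) u v * backward \<mu> (j + 1) v\<bar> \<le> 1"
      using forward_unit_interval[OF \<mu>] backward_unit_interval[OF \<mu>] K_bounds[of u v j "x j"] \<nu>_pos[of j]
      by (auto simp: abs_mult intro!: mult_le_one)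
  qed
  also have "\<dots> = (\<integral>u. forward s \<mu> j u * backward \<mu> j u \<partial>\<mu> j)"
    using step(3) by (subst (2) backward.simps) (simp add: mult.assoc)
  also have "\<dots> = (\<integral>v. backward \<mu> s v \<partial>\<mu> s)" using step by simp
  finally show ?case .
qed

lemma backward_cong: "(\<And>k. i < k \<Longrightarrow> k \<le> n + 1 \<Longrightarrow> \<mu> k = \<mu>' k) \<Longrightarrow> backward \<mu> i = backward \<mu>' i"
proof (induction \<mu> i arbitrary: \<mu>' rule: backward.induct)
  case (1 \<mu> i)
  then show ?case by (simp add: backward.simps[of \<mu> i] backward.simps[of \<mu>' i])
qed

lemma forward_cong: "(\<And>k. k < i \<Longrightarrow> \<mu> k = \<mu>' k) \<Longrightarrow> forward s \<mu> i = forward s \<mu>' i"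
proof (induction s \<mu> i arbitrary: \<mu>' rule: forward.induct)
  case (1 s \<mu> i)
  then show ?case by (simp add: forward.simps[of s \<mu> i] forward.simps[of s \<mu>' i])
qed

lemma forward_ratio_contraction:
  assumes \<mu>: "admissible \<mu>" and "q + 1 \<le> j"
  obtains m Mx where "\<nu> q \<le> m" "m \<le> Mx" "Mx \<le> 1" "Mx - m \<le> (\<Prod>k\<in>{q + 1..j - 1}. 1 - \<nu> k)"
    and "\<And>v. v \<in> space M \<Longrightarrow>
      m * forward (q + 1) \<mu> j v \<le> forward q \<mu> j v \<and> forward q \<mu> j v \<le> Mx * forward (q + 1) \<mu> j v"
  using \<open>q + 1 \<le> j\<close>
proof (induction j arbitrary: thesis rule: int_ge_induct)
  case base
  have "\<nu> q \<le> forward q \<mu> (q + 1) v \<and> forward q \<mu> (q + 1) v \<le> 1" if "v \<in> space M" for v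
    using forward_bounds[OF \<mu> that, of q "q + 1"] by simp
  then show ?case using base[of "\<nu> q" 1] \<nu>_pos[of q] \<nu>_le_one[of q] by (simp add: forward.simps[of "q + 1"])
next
  case (step j)
  obtain m Mx where m: "\<nu> q \<le> m" "m \<le> Mx" "Mx \<le> 1" "Mx - m \<le> (\<Prod>k\<in>{q + 1..j - 1}. 1 - \<nu> k)"
    and ratio: "\<And>v. v \<in> space M \<Longrightarrow>
      m * forward (q + 1) \<mu> j v \<le> forward q \<mu> j v \<and> forward q \<mu> j v \<le> Mx * forward (q + 1) \<mu> j v"
    using step.IH by blast
  let ?a = "forward q \<mu> j" and ?b = "forward (q + 1) \<mu> j"
  define c where "c = (\<integral>u. ?a u \<partial>\<mu> j) / (\<integral>u. ?b u \<partial>\<mu> j)"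
  have "0 \<le> m" using m(1) \<nu>_pos[of q] by linarith
  have bounds: "0 \<le> ?b u \<and> ?b u \<le> 1 \<and> m * ?b u \<le> ?a u \<and> ?a u \<le> Mx * ?b u" if "u \<in> space M" for u
    using forward_unit_interval[OF \<mu> that] ratio[OF that] by blast
  have "(\<Prod>k\<in>{q + 1..j - 1}. \<nu> k) \<le> (\<integral>u. ?b u \<partial>\<mu> j)"
    using prob_space_integral_bounds[OF admissibleD[OF \<mu>] forward_measurable[OF \<mu>] forward_bounds[OF \<mu>]]
    by blast
  then have "0 < (\<integral>u. ?b u \<partial>\<mu> j)" using prod_\<nu>_pos[of "{q + 1..j - 1}"] by linarith
  then have c: "m \<le> c" "c \<le> Mx" "(\<integral>u. ?a u \<partial>\<mu> j) = c * (\<integral>u. ?b u \<partial>\<mu> j)"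
    using integral_quotient_bounds[OF admissibleD[OF \<mu>] forward_measurable[OF \<mu>] forward_measurable[OF \<mu>]
        bounds \<open>0 \<le> m\<close> m(3)]
    unfolding c_def by auto
  have forward_next: "forward s \<mu> (j + 1) v = (\<integral>u. forward s \<mu> j u * K j (x j) u v \<partial>\<mu> j)" if "s \<le> j" for s v
    using that by (subst forward.simps) simp
  have "(m + \<nu> j * (c - m)) * forward (q + 1) \<mu> (j + 1) v \<le> forward q \<mu> (j + 1) v \<and>
      forward q \<mu> (j + 1) v \<le> (Mx - \<nu> j * (Mx - c)) * forward (q + 1) \<mu> (j + 1) v"
    if "v \<in> space M" for v
    using doeblin_step[OF admissibleD[OF \<mu>] forward_measurable[OF \<mu>] forward_measurable[OF \<mu>]
        K_measurable_fst[OF that] bounds _ _ \<open>0 \<le> m\<close> m(3) c] K_bounds[OF _ that] \<nu>_pos[of j]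
      forward_next step(1)
    by (simp add: less_imp_le)
  moreover have "(Mx - \<nu> j * (Mx - c)) - (m + \<nu> j * (c - m)) = (1 - \<nu> j) * (Mx - m)"
    by (simp add: algebra_simps)
  moreover have "(1 - \<nu> j) * (Mx - m) \<le> (\<Prod>k\<in>{q + 1..j + 1 - 1}. 1 - \<nu> k)"
  proof -
    have "{q + 1..j + 1 - 1} = insert j {q + 1..j - 1}" using step(1) by auto
    then show ?thesis using m(4) \<nu>_le_one[of j] by (simp add: mult_left_mono)
  qed
  moreover have "\<nu> j * (c - m) \<le> c - m" "\<nu> j * (Mx - c) \<le> Mx - c"
    using c \<nu>_le_one[of j] \<nu>_pos[of j] by (auto intro!: mult_left_le_one_le)
  ultimately show ?case
    using step.prems[of "m + \<nu> j * (c - m)" "Mx - \<nu> j * (Mx - c)"] m c \<nu>_pos[of j]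
    by (smt (verit) mult_nonneg_nonneg)
qed

text \<open>The probability of the observations x_a, ..., x_n given V_1, ..., V_m = v under the law
  with i.i.d. hidden states of law \<pi>.\<close>
definition prefix_likelihood :: "'v measure \<Rightarrow> int \<Rightarrow> int \<Rightarrow> (int \<Rightarrow> 'v) \<Rightarrow> real" where
  "prefix_likelihood \<pi> a m v =
     (\<Prod>i\<in>{a..m - 1}. K i (x i) (v i) (v (i + 1))) * backward (\<lambda>_. \<pi>) m (v m)"

context
  fixes \<pi> :: "'v measure"
  assumes \<pi>: "prob_space \<pi>" "sets \<pi> = sets M"
begin

lemma admissible_const: "admissible (\<lambda>_. \<pi>)"
  unfolding admissible_def using \<pi> by simp

lemma component_measurable_PiM: "i \<in> I \<Longrightarrow> (\<lambda>v. v i) \<in> measurable (PiM I (\<lambda>_. \<pi>)) M"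
  using measurable_component_singleton[of i I "\<lambda>_. \<pi>"] measurable_cong_sets[OF refl \<pi>(2)] by blast

lemma space_PiM_component: "v \<in> space (PiM I (\<lambda>_. \<pi>)) \<Longrightarrow> i \<in> I \<Longrightarrow> v i \<in> space M"
  using sets_eq_imp_space_eq[OF \<pi>(2)] by (auto simp: space_PiM)

lemma prefix_likelihood_measurable:
  assumes "1 \<le> a" "a \<le> m"
  shows "prefix_likelihood \<pi> a m \<in> borel_measurable (PiM {1..m} (\<lambda>_. \<pi>))"
proof -
  have "(\<lambda>v. K i (x i) (v i) (v (i + 1))) \<in> borel_measurable (PiM {1..m} (\<lambda>_. \<pi>))"
    if "i \<in> {a..m - 1}" for i
  proof -
    have "(\<lambda>v. (v i, v (i + 1))) \<in> measurable (PiM {1..m} (\<lambda>_. \<pi>)) (M \<Otimes>\<^sub>M M)"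
      using that assms by (intro measurable_Pair component_measurable_PiM) auto
    from measurable_comp[OF this K_measurable[of i "x i"]] show ?thesis by (simp add: comp_def)
  qed
  moreover have "(\<lambda>v. backward (\<lambda>_. \<pi>) m (v m)) \<in> borel_measurable (PiM {1..m} (\<lambda>_. \<pi>))"
    using measurable_comp[OF component_measurable_PiM[of m "{1..m}"] backward_measurable[OF admissible_const, of m]]
      assms by (simp add: comp_def)
  ultimately show ?thesis unfolding prefix_likelihood_def by measurable
qed

lemma prefix_likelihood_unit_interval:
  assumes v: "v \<in> space (PiM {1..m} (\<lambda>_. \<pi>))" and "1 \<le> a" "a \<le> m"
  shows "0 \<le> prefix_likelihood \<pi> a m v \<and> prefix_likelihood \<pi> a m v \<le> 1"
proof -
  have "0 \<le> K i (x i) (v i) (v (i + 1)) \<and> K i (x i) (v i) (v (i + 1)) \<le> 1" if "i \<in> {a..m - 1}" for i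
    using K_bounds[OF space_PiM_component[OF v] space_PiM_component[OF v], of i "i + 1" i "x i"]
      \<nu>_pos[of i] that assms by force
  then have "0 \<le> (\<Prod>i\<in>{a..m - 1}. K i (x i) (v i) (v (i + 1))) \<and> (\<Prod>i\<in>{a..m - 1}. K i (x i) (v i) (v (i + 1))) \<le> 1"
    by (auto intro: prod_nonneg prod_le_1)
  moreover have "0 \<le> backward (\<lambda>_. \<pi>) m (v m) \<and> backward (\<lambda>_. \<pi>) m (v m) \<le> 1"
    using backward_unit_interval[OF admissible_const space_PiM_component[OF v]] assms by simp
  ultimately show ?thesis unfolding prefix_likelihood_def by (auto intro: mult_le_one)
qed

lemma integrable_prefix_likelihood:
  assumes "1 \<le> a" "a \<le> m"
  shows "integrable (PiM {1..m} (\<lambda>_. \<pi>)) (prefix_likelihood \<pi> a m)"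
proof -
  interpret P: prob_space "PiM {1..m} (\<lambda>_. \<pi>)" by (rule prob_space_PiM) (rule \<pi>(1))
  show ?thesis
    using prefix_likelihood_measurable prefix_likelihood_unit_interval assms
    by (intro P.integrable_const_bound[where B=1]) auto
qed

lemma integral_prefix_likelihood_step:
  assumes "1 \<le> a" "a < m" "m \<le> n + 1"
  shows "(\<integral>v. prefix_likelihood \<pi> a m v \<partial>PiM {1..m} (\<lambda>_. \<pi>))
       = (\<integral>v. prefix_likelihood \<pi> a (m - 1) v \<partial>PiM {1..m - 1} (\<lambda>_. \<pi>))"
proof -
  interpret prob_space \<pi> by (rule \<pi>(1))
  interpret P: product_sigma_finite "\<lambda>_::int. \<pi>" by unfold_locales
  have ins: "{1..m} = insert m {1..m - 1}" using assms by auto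
  have "(\<integral>v. prefix_likelihood \<pi> a m v \<partial>PiM {1..m} (\<lambda>_. \<pi>))
      = (\<integral>v. (\<integral>y. prefix_likelihood \<pi> a m (v(m := y)) \<partial>\<pi>) \<partial>PiM {1..m - 1} (\<lambda>_. \<pi>))"
    using integrable_prefix_likelihood[of a m] assms unfolding ins
    by (intro P.product_integral_insert) auto
  also have "\<dots> = (\<integral>v. prefix_likelihood \<pi> a (m - 1) v \<partial>PiM {1..m - 1} (\<lambda>_. \<pi>))"
  proof (rule Bochner_Integration.integral_cong[OF refl])
    fix v
    have "{a..m - 1} = insert (m - 1) {a..m - 1 - 1}" using assms by auto
    moreover have "(\<Prod>i\<in>{a..m - 1 - 1}. K i (x i) ((v(m := y)) i) ((v(m := y)) (i + 1)))
        = (\<Prod>i\<in>{a..m - 1 - 1}. K i (x i) (v i) (v (i + 1)))" for y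
      by (rule prod.cong) auto
    ultimately have "prefix_likelihood \<pi> a m (v(m := y))
        = (\<Prod>i\<in>{a..m - 1 - 1}. K i (x i) (v i) (v (i + 1))) * (K (m - 1) (x (m - 1)) (v (m - 1)) y * backward (\<lambda>_. \<pi>) m y)"
      for y unfolding prefix_likelihood_def by simp
    then have "(\<integral>y. prefix_likelihood \<pi> a m (v(m := y)) \<partial>\<pi>)
        = (\<Prod>i\<in>{a..m - 1 - 1}. K i (x i) (v i) (v (i + 1))) *
          (\<integral>y. K (m - 1) (x (m - 1)) (v (m - 1)) y * backward (\<lambda>_. \<pi>) m y \<partial>\<pi>)"
      by simp
    also have "\<dots> = prefix_likelihood \<pi> a (m - 1) v"
      using assms unfolding prefix_likelihood_def by (simp add: backward.simps[of _ "m - 1"])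
    finally show "(\<integral>y. prefix_likelihood \<pi> a m (v(m := y)) \<partial>\<pi>) = prefix_likelihood \<pi> a (m - 1) v" .
  qed
  finally show ?thesis .
qed

lemma obs_prob_eq_integral_backward:
  assumes "1 \<le> a" "a \<le> n + 1"
  shows "obs_prob \<pi> K n a x = (\<integral>v. backward (\<lambda>_. \<pi>) a v \<partial>\<pi>)"
proof -
  have peel: "obs_prob \<pi> K n a x = (\<integral>v. prefix_likelihood \<pi> a m v \<partial>PiM {1..m} (\<lambda>_. \<pi>))"
    if "a \<le> m" "m \<le> n + 1" for m
    using that(2,1)
  proof (induction m rule: int_le_induct)
    case base
    then show ?case unfolding obs_prob_def prefix_likelihood_def by (simp add: backward.simps)
  next
    case (step m)
    then show ?case using integral_prefix_likelihood_step[of a m] assms by simp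
  qed
  have "obs_prob \<pi> K n a x = (\<integral>v. prefix_likelihood \<pi> a a v \<partial>PiM {1..a} (\<lambda>_. \<pi>))"
    by (rule peel) (use assms in auto)
  also have "\<dots> = (\<integral>v. (\<integral>y. backward (\<lambda>_. \<pi>) a y \<partial>\<pi>) \<partial>PiM {1..a - 1} (\<lambda>_. \<pi>))"
  proof -
    interpret prob_space \<pi> by (rule \<pi>(1))
    interpret P: product_sigma_finite "\<lambda>_::int. \<pi>" by unfold_locales
    have ins: "{1..a} = insert a {1..a - 1}" using assms by auto
    show ?thesis
      using integrable_prefix_likelihood[of a a] assms unfolding ins
      by (subst P.product_integral_insert) (auto simp: prefix_likelihood_def)
  qed
  also have "\<dots> = (\<integral>v. backward (\<lambda>_. \<pi>) a v \<partial>\<pi>)"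
  proof -
    interpret P: prob_space "PiM {1..a - 1} (\<lambda>_. \<pi>)" by (rule prob_space_PiM) (rule \<pi>(1))
    show ?thesis by (simp add: P.prob_space)
  qed
  finally show ?thesis .
qed

end

section \<open>Telescoping over hybrid laws\<close>

definition family_cond_prob :: "(int \<Rightarrow> 'v measure) \<Rightarrow> int \<Rightarrow> real" where
  "family_cond_prob \<mu> q = (\<integral>v. backward \<mu> q v \<partial>\<mu> q) / (\<integral>v. backward \<mu> (q + 1) v \<partial>\<mu> (q + 1))"

lemma cond_prob_eq_family_cond_prob:
  assumes "prob_space \<pi>" "sets \<pi> = sets M" "1 \<le> q" "q \<le> n"
  shows "cond_prob \<pi> K n q x = family_cond_prob (\<lambda>_. \<pi>) q"
  using obs_prob_eq_integral_backward[OF assms(1,2), of q] obs_prob_eq_integral_backward[OF assms(1,2), of "q + 1"]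
    assms(3,4)
  unfolding cond_prob_def family_cond_prob_def by simp

lemma ln_family_cond_prob_swap_first:
  assumes \<mu>: "admissible \<mu>" and \<mu>': "admissible \<mu>'" and "q \<le> n"
    and agree: "\<And>i. i \<noteq> q \<Longrightarrow> \<mu>' i = \<mu> i"
  shows "\<bar>ln (family_cond_prob \<mu> q) - ln (family_cond_prob \<mu>' q)\<bar> \<le> tv_norm M (\<mu> q) (\<mu>' q) / \<nu> q"
proof -
  let ?A = "\<lambda>\<mu>''. \<integral>v. backward \<mu> q v \<partial>\<mu>'' q" and ?T = "\<integral>v. backward \<mu> (q + 1) v \<partial>\<mu> (q + 1)"
  have "backward \<mu>' q = backward \<mu> q" "backward \<mu>' (q + 1) = backward \<mu> (q + 1)"
    using agree by (auto intro: backward_cong)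
  then have eq: "family_cond_prob \<mu> q = ?A \<mu> / ?T" "family_cond_prob \<mu>' q = ?A \<mu>' / ?T"
    unfolding family_cond_prob_def using agree[of "q + 1"] by simp_all
  obtain S where S: "0 < S" "\<And>v. v \<in> space M \<Longrightarrow> \<nu> q * S \<le> backward \<mu> q v \<and> backward \<mu> q v \<le> S"
    using backward_oscillation[OF \<mu>, of q] \<open>q \<le> n\<close> by auto
  have "\<nu> q * S \<le> ?A \<mu>'' \<and> ?A \<mu>'' \<le> S" if "admissible \<mu>''" for \<mu>''
    by (rule prob_space_integral_bounds[OF admissibleD[OF that] backward_measurable[OF \<mu>] S(2)])
  then have "0 < ?A \<mu>" "0 < ?A \<mu>'"
    using \<mu> \<mu>' \<nu>_pos[of q] S(1) by (smt (verit) mult_pos_pos)+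
  moreover have "0 < ?T"
    using prob_space_integral_bounds[OF admissibleD[OF \<mu>] backward_measurable[OF \<mu>] backward_bounds[OF \<mu>]]
      prod_\<nu>_pos[of "{q + 1..n}"] by (smt (verit))
  ultimately have "ln (family_cond_prob \<mu> q) - ln (family_cond_prob \<mu>' q) = ln (?A \<mu>) - ln (?A \<mu>')"
    unfolding eq by (simp add: ln_div)
  also have "\<bar>\<dots>\<bar> \<le> tv_norm M (\<mu> q) (\<mu>' q) / \<nu> q"
    by (rule abs_ln_integral_diff_le[OF admissibleD[OF \<mu>] admissibleD[OF \<mu>'] backward_measurable[OF \<mu>]
        \<nu>_pos S(1) S(2)])
  finally show ?thesis .
qed

lemma ln_family_cond_prob_swap:
  assumes \<mu>: "admissible \<mu>" and \<mu>': "admissible \<mu>'" and j: "q + 1 \<le> j" "j \<le> n + 1"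
    and agree: "\<And>i. i \<noteq> j \<Longrightarrow> \<mu>' i = \<mu> i"
  shows "\<bar>ln (family_cond_prob \<mu> q) - ln (family_cond_prob \<mu>' q)\<bar>
     \<le> 2 * (\<Prod>k\<in>{q + 1..j - 1}. 1 - \<nu> k) * tv_norm M (\<mu> j) (\<mu>' j) / (\<nu> q * (\<nu> (j - 1) * \<nu> j))"
proof -
  let ?a = "forward q \<mu> j" and ?b = "forward (q + 1) \<mu> j" and ?t = "backward \<mu> j"
  have "forward q \<mu>' j = ?a" "forward (q + 1) \<mu>' j = ?b" "backward \<mu>' j = ?t"
    using agree by (auto intro!: forward_cong backward_cong)
  then have representation: "family_cond_prob \<mu>'' q = (\<integral>v. ?a v * ?t v \<partial>\<mu>'' j) / (\<integral>v. ?b v * ?t v \<partial>\<mu>'' j)"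
    if "\<mu>'' \<in> {\<mu>, \<mu>'}" for \<mu>''
    using that integral_forward_backward[OF \<mu>, of q j] integral_forward_backward[OF \<mu>, of "q + 1" j]
      integral_forward_backward[OF \<mu>', of q j] integral_forward_backward[OF \<mu>', of "q + 1" j] j
    unfolding family_cond_prob_def by auto
  obtain m Mx where m: "\<nu> q \<le> m" "Mx - m \<le> (\<Prod>k\<in>{q + 1..j - 1}. 1 - \<nu> k)"
    and ratio: "\<And>v. v \<in> space M \<Longrightarrow> m * ?b v \<le> ?a v \<and> ?a v \<le> Mx * ?b v"
    using forward_ratio_contraction[OF \<mu> j(1)] by metis
  obtain B where B: "0 < B" "\<And>v. v \<in> space M \<Longrightarrow> \<nu> (j - 1) * B \<le> ?b v \<and> ?b v \<le> B"
    using forward_oscillation[OF \<mu>] by metis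
  obtain T where T: "0 < T" "\<And>v. v \<in> space M \<Longrightarrow> \<nu> j * T \<le> ?t v \<and> ?t v \<le> T"
    using backward_oscillation[OF \<mu> j(2)] by metis
  have "0 \<le> (\<Prod>k\<in>{q + 1..j - 1}. 1 - \<nu> k)"
    using \<nu>_le_one by (intro prod_nonneg) (simp add: algebra_simps)
  then show ?thesis
    unfolding representation[of \<mu>, simplified] representation[of \<mu>', simplified]
    using abs_ln_quotient_diff_le[OF admissibleD[OF \<mu>, of j] admissibleD[OF \<mu>', of j]
        forward_measurable[OF \<mu>, of q j] forward_measurable[OF \<mu>, of "q + 1" j] backward_measurable[OF \<mu>, of j]
        ratio B(2) T(2) B(1) T(1) \<nu>_pos[of "j - 1"] \<nu>_pos[of j] \<nu>_pos[of q] m(1) _ m(2)]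
    by simp
qed

lemma family_cond_prob_cong:
  assumes "q \<le> n" and agree: "\<And>i. q \<le> i \<Longrightarrow> i \<le> n + 1 \<Longrightarrow> \<mu> i = \<mu>' i"
  shows "family_cond_prob \<mu> q = family_cond_prob \<mu>' q"
proof -
  have "backward \<mu> q = backward \<mu>' q" "backward \<mu> (q + 1) = backward \<mu>' (q + 1)"
    using agree by (auto intro!: backward_cong)
  moreover have "\<mu> q = \<mu>' q" "\<mu> (q + 1) = \<mu>' (q + 1)" using agree \<open>q \<le> n\<close> by simp_all
  ultimately show ?thesis unfolding family_cond_prob_def by simp
qed

definition hybrid :: "'a \<Rightarrow> 'a \<Rightarrow> int \<Rightarrow> int \<Rightarrow> 'a" where
  "hybrid \<pi> \<pi>' j i = (if i < j then \<pi>' else \<pi>)"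

lemma admissible_hybrid:
  assumes "prob_space \<pi>" "sets \<pi> = sets M" "prob_space \<pi>'" "sets \<pi>' = sets M"
  shows "admissible (hybrid \<pi> \<pi>' j)"
  using assms unfolding admissible_def hybrid_def by auto

lemma ln_hybrid_cond_prob_step_le:
  assumes \<pi>: "prob_space \<pi>" "sets \<pi> = sets M" and \<pi>': "prob_space \<pi>'" "sets \<pi>' = sets M"
    and "q \<le> n" and l: "0 \<le> l" "l \<le> n + 1 - q"
  shows "\<bar>ln (family_cond_prob (hybrid \<pi> \<pi>' (q + l)) q) - ln (family_cond_prob (hybrid \<pi> \<pi>' (q + l + 1)) q)\<bar>
    \<le> 2 * ((1 / (\<nu> q * \<nu> (q+l-1) * \<nu> (q+l))) * (\<Prod>k\<in>{q+1..q+l-1}. 1 - \<nu> k)) * tv_norm M \<pi> \<pi>'"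
proof -
  note admissible = admissible_hybrid[OF \<pi> \<pi>']
  have agree: "hybrid \<pi> \<pi>' (q + l + 1) i = hybrid \<pi> \<pi>' (q + l) i" if "i \<noteq> q + l" for i
    using that by (auto simp: hybrid_def)
  have at: "hybrid \<pi> \<pi>' (q + l) (q + l) = \<pi>" "hybrid \<pi> \<pi>' (q + l + 1) (q + l) = \<pi>'"
    by (auto simp: hybrid_def)
  have tv: "0 \<le> tv_norm M \<pi> \<pi>'" by (rule tv_norm_nonneg[OF \<pi> \<pi>'])
  show ?thesis
  proof (cases "l = 0")
    case True
    have "\<bar>ln (family_cond_prob (hybrid \<pi> \<pi>' (q + l)) q) - ln (family_cond_prob (hybrid \<pi> \<pi>' (q + l + 1)) q)\<bar>
        \<le> tv_norm M \<pi> \<pi>' / \<nu> q"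
      using ln_family_cond_prob_swap_first[of "hybrid \<pi> \<pi>' (q + l)" "hybrid \<pi> \<pi>' (q + l + 1)",
          OF admissible admissible \<open>q \<le> n\<close>] agree at True by simp
    also have "\<dots> \<le> tv_norm M \<pi> \<pi>' / (\<nu> q * (\<nu> (q - 1) * \<nu> q))"
    proof (rule divide_left_mono[OF _ tv])
      show "\<nu> q * (\<nu> (q - 1) * \<nu> q) \<le> \<nu> q"
        using \<nu>_pos \<nu>_le_one by (intro mult_right_le_one_le) (auto intro: mult_le_one less_imp_le)
      show "0 < \<nu> q * (\<nu> q * (\<nu> (q - 1) * \<nu> q))" using \<nu>_pos by simp
    qed
    also have "\<dots> \<le> 2 * (tv_norm M \<pi> \<pi>' / (\<nu> q * (\<nu> (q - 1) * \<nu> q)))"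
    proof -
      have "0 < \<nu> q * (\<nu> (q - 1) * \<nu> q)" using \<nu>_pos by simp
      then have "0 \<le> tv_norm M \<pi> \<pi>' / (\<nu> q * (\<nu> (q - 1) * \<nu> q))" using tv by simp
      then show ?thesis by (simp only: mult_2 le_add_same_cancel1)
    qed
    finally show ?thesis using True by (simp add: mult_ac)
  next
    case False
    then have "q + 1 \<le> q + l" "q + l \<le> n + 1" using l by auto
    from ln_family_cond_prob_swap[of "hybrid \<pi> \<pi>' (q + l)" "hybrid \<pi> \<pi>' (q + l + 1)",
        OF admissible admissible this] agree at
    show ?thesis by (simp add: field_simps)
  qed
qed

lemma ln_family_cond_prob_const_diff_le:
  assumes \<pi>: "prob_space \<pi>" "sets \<pi> = sets M" and \<pi>': "prob_space \<pi>'" "sets \<pi>' = sets M"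
    and q: "1 \<le> q" "q \<le> n"
  shows "\<bar>ln (family_cond_prob (\<lambda>_. \<pi>) q) - ln (family_cond_prob (\<lambda>_. \<pi>') q)\<bar>
    \<le> 2 * (\<Sum>l\<in>{0..n+1-q}. (1 / (\<nu> q * \<nu> (q+l-1) * \<nu> (q+l))) * (\<Prod>k\<in>{q+1..q+l-1}. 1 - \<nu> k))
      * tv_norm M \<pi> \<pi>'"
proof -
  define G where "G l = ln (family_cond_prob (hybrid \<pi> \<pi>' (q + l)) q)" for l
  have "G 0 = ln (family_cond_prob (\<lambda>_. \<pi>) q)" "G (n + 1 - q + 1) = ln (family_cond_prob (\<lambda>_. \<pi>') q)"
    unfolding G_def using q by (auto intro!: arg_cong[where f=ln] family_cond_prob_cong simp: hybrid_def)
  then have "ln (family_cond_prob (\<lambda>_. \<pi>) q) - ln (family_cond_prob (\<lambda>_. \<pi>') q)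
      = (\<Sum>l\<in>{0..n+1-q}. G l - G (l + 1))"
    using sum_int_telescope[of "n + 1 - q" G] q by simp
  also have "\<bar>\<dots>\<bar> \<le> (\<Sum>l\<in>{0..n+1-q}. 2 * ((1 / (\<nu> q * \<nu> (q+l-1) * \<nu> (q+l))) *
      (\<Prod>k\<in>{q+1..q+l-1}. 1 - \<nu> k)) * tv_norm M \<pi> \<pi>')"
    using ln_hybrid_cond_prob_step_le[OF \<pi> \<pi>' q(2)] unfolding G_def
    by (intro order_trans[OF sum_abs sum_mono]) (simp add: add.assoc)
  finally show ?thesis by (simp add: sum_distrib_left sum_distrib_right mult.assoc)
qed
end

theorem lemma7:
  fixes M \<pi> \<pi>' :: "'v measure"
    and K :: "int \<Rightarrow> 'x \<Rightarrow> 'v \<Rightarrow> 'v \<Rightarrow> real"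
    and \<nu> :: "int \<Rightarrow> real"
    and n q :: int
    and x :: "int \<Rightarrow> 'x"
  assumes n: "1 \<le> n"
    and q: "1 \<le> q" "q \<le> n"
    and \<pi>: "prob_space \<pi>" "sets \<pi> = sets M"
    and \<pi>': "prob_space \<pi>'" "sets \<pi>' = sets M"
    and K_meas: "\<And>i y. (\<lambda>(v, w). K i y v w) \<in> borel_measurable (M \<Otimes>\<^sub>M M)"
    and K_nonneg: "\<And>i y v w. v \<in> space M \<Longrightarrow> w \<in> space M \<Longrightarrow> 0 \<le> K i y v w"
    and K_prob: "\<And>i v w. v \<in> space M \<Longrightarrow> w \<in> space M \<Longrightarrow>
                   ((\<lambda>y. K i y v w) has_sum 1) UNIV"
    and H2_pos: "\<And>i. 0 < \<nu> i"
    and H2: "\<And>i y v w. v \<in> space M \<Longrightarrow> w \<in> space M \<Longrightarrow>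
                   \<nu> i \<le> K i y v w \<and> K i y v w \<le> 1"
  shows "\<bar>ln (cond_prob \<pi> K n q x) - ln (cond_prob \<pi>' K n q x)\<bar>
           \<le> 2 * (\<Sum>l\<in>{0..n+1-q}. (1 / (\<nu> q * \<nu> (q+l-1) * \<nu> (q+l))) *
                     (\<Prod>k\<in>{q+1..q+l-1}. 1 - \<nu> k)) * tv_norm M \<pi> \<pi>'"
proof -
  have "space M \<noteq> {}"
    using prob_space.not_empty[OF \<pi>(1)] sets_eq_imp_space_eq[OF \<pi>(2)] by simp
  then interpret hmm M K \<nu> n x
    using K_meas H2_pos H2 by unfold_locales
  show ?thesis
    using ln_family_cond_prob_const_diff_le[OF \<pi> \<pi>' q]
    unfolding cond_prob_eq_family_cond_prob[OF \<pi> q] cond_prob_eq_family_cond_prob[OF \<pi>' q] .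
qed

end
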